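(* Let $\varphi:G\to H$ be a surjective group homomorphism. Then the homomorphism $f_\varphi:H_2(H)\to K_\varphi/\Gamma_\varphi$ induced by the central extension $$1\to K_\varphi/\Gamma_\varphi\to G/\Gamma_\varphi\xrightarrow{\ \varphi\ } H\to 1$$ coincides with the composition $$\psi\circ(i\circ\varepsilon)^{-1}\circ\partial:H_2(H)\to H_1(G,H)\to H_1(\mathrm{Coker}(\delta_\varphi))\to K_\varphi/\Gamma_\varphi .$$
   Context: Group homology: for a group $G$ let $C_n(G)=\mathbb Z[G^n]$ (free abelian group on $G^n$) with differential $d=\sum_{i=0}^n(-1)^id_i$, where $d_0(g_1,\dots,g_n)=(g_2,\dots,g_n)$, $d_i(g_1,\dots,g_n)=(g_1,\dots,g_ig_{i+1},\dots,g_n)$ for $1\le i\le n-1$, $d_n(g_1,\dots,g_n)=(g_1,\dots,g_{n-1})$; $H_n(G)$ is its homology. For a homomorphism $\varphi:G\to H$, $\varphi_*$ acts coordinatewise on chains. The relative complex has $\mathrm{Tot}_n=\mathbb Z[H^{n+1}]\oplus\mathbb Z[G^n]$ with differential $d(\varphi)(y,x)=(dy+\varphi_*(x),-dx)$; its homology is $H_n(G,H)$. For $\varphi$ surjective, the boundary map $\partial:H_{n+1}(H)\to H_n(G,H)$ is defined (with this sign convention) by $\partial[z]=[(0,-d\tilde z)]$, where $z$ is a cycle and $\tilde z\in\mathbb Z[G^{n+1}]$ is any chain with $\varphi_*(\tilde z)=z$. Cokernel complex: $G^n\times_{H^n}G^n$ is the set of pairs $(g^1,g^2)\in G^n\times G^n$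 with $\varphi_*(g^1)=\varphi_*(g^2)$; $\mathrm{Coker}_n(\delta_\varphi)$ is $\mathbb Z[G^n\times_{H^n}G^n]$ modulo the relations $(g^1,g^2)+(g^2,g^3)\sim(g^1,g^3)$, with differential $(g^1,g^2)\mapsto\sum_{i=0}^n(-1)^i(d_ig^1,d_ig^2)$. The chain map $i\circ\varepsilon:\mathrm{Coker}_n(\delta_\varphi)\to\mathrm{Tot}_n$, $(g^1,g^2)\mapsto(0,g^1-g^2)$, induces an isomorphism $H_n(\mathrm{Coker}(\delta_\varphi))\cong H_n(G,H)$ when $\varphi$ is surjective (a known result of M. Levine). $K_\varphi=\ker\varphi$ and $\Gamma_\varphi$ is the smallest normal subgroup of $G$ containing all $gkg^{-1}k^{-1}$ with $g\in G$, $k\in K_\varphi$. The map $\psi:\mathbb Z[G\times_HG]\to K_\varphi/\Gamma_\varphi$, $\sum_iz_i(x_i,y_i)\mapsto\prod_i(x_iy_i^{-1})^{z_i}$ descends to an isomorphism $\psi:H_1(\mathrm{Coker}(\delta_\varphi))\to K_\varphi/\Gamma_\varphi$ (Levine). The map $f_\varphi$ is explicitly: write a class in $H_2(H)$ as represented by a cycle $x=\sum_{i=1}^{2n}(-1)^i(x_i,y_i)$ and choose any set-theoretic section $t:H\to G$ of $\varphi$; then $f_\varphi[x]=\Big(\prod_{k=1}^n t(x_{2k})t(y_{2k})t(x_{2k}y_{2k})^{-1}\Big)\cdot\Big(\prod_{k=1}^n t(x_{2k-1})t(y_{2k-1})t(x_{2k-1}y_{2k-1})^{-1}\Big)^{-1}\in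 K_\varphi/\Gamma_\varphi$. *)

theory Defs
  imports "HOL-Algebra.Algebra"
begin

definition supp :: "('a \<Rightarrow> int) \<Rightarrow> 'a set" where
  "supp c = {l. c l \<noteq> 0}"

text \<open>C_n(M) = Z[M^n]: finitely supported integer functions on tuples (lists of length n).\<close>
definition chains :: "('a, 'b) monoid_scheme \<Rightarrow> nat \<Rightarrow> ('a list \<Rightarrow> int) set" where
  "chains M n = {c. finite (supp c) \<and> (\<forall>l\<in>supp c. length l = n \<and> set l \<subseteq> carrier M)}"

definition face :: "('a, 'b) monoid_scheme \<Rightarrow> nat \<Rightarrow> 'a list \<Rightarrow> 'a list" where
  "face M i l = (if i = 0 then tl l
                 else if i = length l then butlast l
                 else take (i - 1) l @ [l ! (i - 1) \<otimes>\<^bsub>M\<^esub> l ! i] @ drop (i + 1) l)"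

text \<open>Differential d = sum_{i=0}^n (-1)^i d_i (extended linearly; zero on 0-chains).\<close>
definition bd :: "('a, 'b) monoid_scheme \<Rightarrow> ('a list \<Rightarrow> int) \<Rightarrow> ('a list \<Rightarrow> int)" where
  "bd M c = (\<lambda>m. \<Sum>l\<in>supp c. \<Sum>i\<in>{i. 1 \<le> length l \<and> i \<le> length l \<and> face M i l = m}.
                 (-1) ^ i * c l)"

definition push :: "('a \<Rightarrow> 'b) \<Rightarrow> ('a \<Rightarrow> int) \<Rightarrow> ('b \<Rightarrow> int)" where
  "push f c = (\<lambda>m. \<Sum>l\<in>{l\<in>supp c. f l = m}. c l)"

text \<open>Differential of the relative complex Tot_n = Z[H^{n+1}] + Z[G^n]:
  d(y,x) = (dy + phi_*(x), -dx).\<close>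
definition tot_bd :: "('g, 'a) monoid_scheme \<Rightarrow> ('h, 'b) monoid_scheme \<Rightarrow> ('g \<Rightarrow> 'h)
    \<Rightarrow> ('h list \<Rightarrow> int) \<times> ('g list \<Rightarrow> int) \<Rightarrow> ('h list \<Rightarrow> int) \<times> ('g list \<Rightarrow> int)" where
  "tot_bd G H \<phi> w = ((\<lambda>m. bd H (fst w) m + push (map \<phi>) (snd w) m), (\<lambda>m. - bd G (snd w) m))"

text \<open>Representatives of Coker_n: Z[G^n x_{H^n} G^n].\<close>
definition coker_chains :: "('g, 'a) monoid_scheme \<Rightarrow> ('g \<Rightarrow> 'h) \<Rightarrow> nat
    \<Rightarrow> (('g list \<times> 'g list) \<Rightarrow> int) set" where
  "coker_chains G \<phi> n = {c. finite (supp c) \<and>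
      (\<forall>p\<in>supp c. length (fst p) = n \<and> length (snd p) = n \<and>
          set (fst p) \<subseteq> carrier G \<and> set (snd p) \<subseteq> carrier G \<and>
          map \<phi> (fst p) = map \<phi> (snd p))}"

text \<open>The map epsilon: (g1,g2) |-> g1 - g2 (so i o epsilon maps c to (0, eps c)).\<close>
definition eps :: "(('g list \<times> 'g list) \<Rightarrow> int) \<Rightarrow> ('g list \<Rightarrow> int)" where
  "eps c = (\<lambda>l. \<Sum>p\<in>supp c. (if fst p = l then c p else 0) - (if snd p = l then c p else 0))"

definition Gamma :: "('g, 'a) monoid_scheme \<Rightarrow> ('h, 'b) monoid_scheme \<Rightarrow> ('g \<Rightarrow> 'h) \<Rightarrow> 'g set" where
  "Gamma G H \<phi> = \<Inter>{N. normal N G \<and>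
      {g \<otimes>\<^bsub>G\<^esub> k \<otimes>\<^bsub>G\<^esub> inv\<^bsub>G\<^esub> g \<otimes>\<^bsub>G\<^esub> inv\<^bsub>G\<^esub> k | g k.
         g \<in> carrier G \<and> k \<in> kernel G H \<phi>} \<subseteq> N}"

definition KmodGamma :: "('g, 'a) monoid_scheme \<Rightarrow> ('h, 'b) monoid_scheme \<Rightarrow> ('g \<Rightarrow> 'h)
    \<Rightarrow> 'g set monoid" where
  "KmodGamma G H \<phi> = (G Mod (Gamma G H \<phi>))
      \<lparr>carrier := (\<lambda>k. Gamma G H \<phi> #>\<^bsub>G\<^esub> k) ` kernel G H \<phi>\<rparr>"

definition psi :: "('g, 'a) monoid_scheme \<Rightarrow> ('h, 'b) monoid_scheme \<Rightarrow> ('g \<Rightarrow> 'h)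
    \<Rightarrow> (('g list \<times> 'g list) \<Rightarrow> int) \<Rightarrow> 'g set" where
  "psi G H \<phi> c = finprod (KmodGamma G H \<phi>)
      (\<lambda>p. (Gamma G H \<phi> #>\<^bsub>G\<^esub> (hd (fst p) \<otimes>\<^bsub>G\<^esub> inv\<^bsub>G\<^esub> (hd (snd p))))
             [^]\<^bsub>KmodGamma G H \<phi>\<^esub> (c p))
      (supp c)"

definition ordprod :: "('a, 'b) monoid_scheme \<Rightarrow> 'a list \<Rightarrow> 'a" where
  "ordprod M xs = foldr (\<lambda>a b. a \<otimes>\<^bsub>M\<^esub> b) xs \<one>\<^bsub>M\<^esub>"

definition zchain :: "nat \<Rightarrow> (nat \<Rightarrow> 'h) \<Rightarrow> (nat \<Rightarrow> 'h) \<Rightarrow> ('h list \<Rightarrow> int)" where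
  "zchain n xs ys = (\<lambda>l. \<Sum>i\<in>{1..2*n}. if l = [xs i, ys i] then (-1) ^ i else 0)"

definition fphi :: "('g, 'a) monoid_scheme \<Rightarrow> ('h, 'b) monoid_scheme \<Rightarrow> ('g \<Rightarrow> 'h) \<Rightarrow> ('h \<Rightarrow> 'g)
    \<Rightarrow> nat \<Rightarrow> (nat \<Rightarrow> 'h) \<Rightarrow> (nat \<Rightarrow> 'h) \<Rightarrow> 'g set" where
  "fphi G H \<phi> t n xs ys =
     (let Q = G Mod (Gamma G H \<phi>);
          e = (\<lambda>i. Gamma G H \<phi> #>\<^bsub>G\<^esub>
                 (t (xs i) \<otimes>\<^bsub>G\<^esub> t (ys i) \<otimes>\<^bsub>G\<^esub> inv\<^bsub>G\<^esub> (t (xs i \<otimes>\<^bsub>H\<^esub> ys i))))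
      in ordprod Q (map (\<lambda>k. e (2 * k)) [1..<n + 1])
         \<otimes>\<^bsub>Q\<^esub> inv\<^bsub>Q\<^esub> (ordprod Q (map (\<lambda>k. e (2 * k - 1)) [1..<n + 1])))"

end

theory Submission
  imports Defs
begin

text \<open>
  Let \<open>\<phi> : G \<rightarrow> H\<close> be a homomorphism with set-theoretic section \<open>t\<close>, kernel \<open>K\<close>, and let
  \<open>A = K/\<Gamma>\<close>, a central subgroup of \<open>Q = G/\<Gamma>\<close>.  The proof is a cochain computation in \<open>A\<close>:
  \<open>\<beta>(h\<^sub>1, h\<^sub>2) = t(h\<^sub>1) t(h\<^sub>2) t(h\<^sub>1 h\<^sub>2)\<inverse>\<close> is a 2-cocycle on \<open>H\<close>, and \<open>\<kappa>(g) = g t(\<phi> g)\<inverse>\<close>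
  is a 1-cochain on \<open>G\<close> whose coboundary is the pull-back of \<open>\<beta>\<close> (up to sign).  Moreover
  \<open>\<psi>(c) = \<kappa>(\<epsilon> c)\<close>, and \<open>f\<^sub>\<phi>\<close> is \<open>\<beta>\<close> evaluated on the cycle \<open>z = \<Sum> (-1)\<^sup>i (x\<^sub>i, y\<^sub>i)\<close>.
  The hypothesis \<open>d(w\<^sub>1, w\<^sub>2) = (0, \<epsilon>(c) + d z\<^sup>~)\<close> in the relative complex, where \<open>\<phi>\<^sub>* z\<^sup>~ = z\<close>,
  says \<open>\<epsilon>(c) = -d w\<^sub>2 - d z\<^sup>~\<close> and \<open>\<phi>\<^sub>* w\<^sub>2 = -d w\<^sub>1\<close>, hence
  \<open>\<psi>(c) = \<kappa>(-d w\<^sub>2) \<kappa>(-d z\<^sup>~) = \<beta>(\<phi>\<^sub>* w\<^sub>2) \<beta>(z) = \<beta>(-d w\<^sub>1) \<beta>(z) = \<beta>(z) = f\<^sub>\<phi>\<close>.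
\<close>

lemma supp_uminus [simp]: "supp (\<lambda>l. - u l) = supp u"
  by (simp add: supp_def)

lemma supp_add: "supp (\<lambda>l. u l + v l) \<subseteq> supp u \<union> supp v"
  by (auto simp: supp_def)

lemma supp_sum: "supp (\<lambda>l. \<Sum>p\<in>P. g p l) \<subseteq> (\<Union>p\<in>P. supp (g p))"
  by (auto simp: supp_def intro: ccontr dest: sum.neutral)

lemma finite_supp_delta [simp]:
  "finite (supp (\<lambda>l. if a = l then k else (0::int)))"
  "finite (supp (\<lambda>l. if l = a then k else (0::int)))"
  by (rule finite_subset[of _ "{a}"]; auto simp: supp_def)+

lemma finite_supp_chains: "w \<in> chains M k \<Longrightarrow> finite (supp w)"
  by (simp add: chains_def)

lemma chains_2_shape:
  "w \<in> chains M 2 \<Longrightarrow> l \<in> supp w \<Longrightarrow> \<exists>a b. l = [a, b] \<and> a \<in> carrier M \<and> b \<in> carrier M"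
  unfolding chains_def by (cases l rule: list.exhaust; cases "tl l" rule: list.exhaust) auto

lemma chains_3_shape:
  "w \<in> chains M 3 \<Longrightarrow> l \<in> supp w \<Longrightarrow>
     \<exists>a b c. l = [a, b, c] \<and> a \<in> carrier M \<and> b \<in> carrier M \<and> c \<in> carrier M"
  unfolding chains_def
  by (cases l rule: list.exhaust; cases "tl l" rule: list.exhaust; cases "tl (tl l)" rule: list.exhaust)
    auto

lemma coker_chains_1_shape:
  "c \<in> coker_chains M \<phi> 1 \<Longrightarrow> p \<in> supp c \<Longrightarrow>
     \<exists>a b. p = ([a], [b]) \<and> a \<in> carrier M \<and> b \<in> carrier M \<and> \<phi> a = \<phi> b"
  unfolding coker_chains_def
  by (cases "fst p" rule: list.exhaust; cases "snd p" rule: list.exhaust; cases p) auto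

definition simplex_bd :: "('a, 'b) monoid_scheme \<Rightarrow> 'a list \<Rightarrow> ('a list \<Rightarrow> int)" where
  "simplex_bd M l = (\<lambda>m. \<Sum>i\<in>{i. 1 \<le> length l \<and> i \<le> length l \<and> face M i l = m}. (-1) ^ i)"

lemma bd_eq_sum_simplex_bd: "bd M w = (\<lambda>m. \<Sum>l\<in>supp w. w l * simplex_bd M l m)"
  unfolding bd_def simplex_bd_def by (simp add: sum_distrib_left mult.commute)

lemma supp_simplex_bd: "supp (simplex_bd M l) \<subseteq> (\<lambda>i. face M i l) ` {..length l}"
proof
  fix m assume "m \<in> supp (simplex_bd M l)"
  then have "sum ((^) (-1)) {i. 1 \<le> length l \<and> i \<le> length l \<and> face M i l = m} \<noteq> (0::int)"
    by (simp add: supp_def simplex_bd_def)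
  then have "{i. 1 \<le> length l \<and> i \<le> length l \<and> face M i l = m} \<noteq> {}"
    by (metis sum.empty)
  then show "m \<in> (\<lambda>i. face M i l) ` {..length l}" by auto
qed

lemma finite_supp_simplex_bd: "finite (supp (simplex_bd M l))"
  using supp_simplex_bd by (rule finite_subset) simp

lemma finite_supp_bd:
  assumes "finite (supp w)" shows "finite (supp (bd M w))"
proof -
  have "supp (bd M w) \<subseteq> (\<Union>l\<in>supp w. supp (\<lambda>m. w l * simplex_bd M l m))"
    unfolding bd_eq_sum_simplex_bd by (rule supp_sum)
  also have "\<dots> \<subseteq> (\<Union>l\<in>supp w. supp (simplex_bd M l))"
    by (auto simp: supp_def)
  finally show ?thesis
    using assms finite_supp_simplex_bd by (meson finite_UN_I finite_subset)
qed

lemma face_2_0: "face M 0 [a, b] = [b]" by (simp add: face_def)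
lemma face_2_1: "face M 1 [a, b] = [a \<otimes>\<^bsub>M\<^esub> b]" by (simp add: face_def)
lemma face_2_2: "face M 2 [a, b] = [a]" by (simp add: face_def)

lemma simplex_bd_2:
  "simplex_bd M [a, b] = (\<lambda>m. (if [b] = m then 1 else 0) + (if [a \<otimes>\<^bsub>M\<^esub> b] = m then -1 else 0)
                              + (if [a] = m then 1 else 0))"
proof
  fix m
  have sum3: "(\<Sum>i\<in>{0, 1, 2::nat}. F i) = F 0 + F 1 + F 2" for F :: "nat \<Rightarrow> int" by simp
  have faces: "{i. 1 \<le> length [a, b] \<and> i \<le> length [a, b] \<and> face M i [a, b] = m}
      = {i\<in>{0, 1, 2}. face M i [a, b] = m}" by auto
  have "simplex_bd M [a, b] m = (\<Sum>i\<in>{0, 1, 2::nat}. if face M i [a, b] = m then (-1) ^ i else 0)"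
    unfolding simplex_bd_def faces by (rule sum.inter_filter) simp
  also have "\<dots> = (if [b] = m then 1 else 0) + (if [a \<otimes>\<^bsub>M\<^esub> b] = m then -1 else 0)
                              + (if [a] = m then 1 else 0)"
    using sum3[of "\<lambda>i. if face M i [a, b] = m then (-1) ^ i else 0"]
    by (simp only: face_2_0 face_2_1 face_2_2) simp
  finally show "simplex_bd M [a, b] m = \<dots>" .
qed

lemma face_3_0: "face M 0 [a, b, c] = [b, c]" by (simp add: face_def)
lemma face_3_1: "face M 1 [a, b, c] = [a \<otimes>\<^bsub>M\<^esub> b, c]" by (simp add: face_def)
lemma face_3_2: "face M 2 [a, b, c] = [a, b \<otimes>\<^bsub>M\<^esub> c]" by (simp add: face_def numeral_2_eq_2)
lemma face_3_3: "face M 3 [a, b, c] = [a, b]" by (simp add: face_def)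

lemma simplex_bd_3:
  "simplex_bd M [a, b, c] = (\<lambda>m. (if [b, c] = m then 1 else 0) + (if [a \<otimes>\<^bsub>M\<^esub> b, c] = m then -1 else 0)
      + (if [a, b \<otimes>\<^bsub>M\<^esub> c] = m then 1 else 0) + (if [a, b] = m then -1 else 0))"
proof
  fix m
  have sum4: "(\<Sum>i\<in>{0, 1, 2, 3::nat}. F i) = F 0 + F 1 + F 2 + F 3" for F :: "nat \<Rightarrow> int" by simp
  have faces: "{i. 1 \<le> length [a, b, c] \<and> i \<le> length [a, b, c] \<and> face M i [a, b, c] = m}
      = {i\<in>{0, 1, 2, 3}. face M i [a, b, c] = m}" by auto
  have "simplex_bd M [a, b, c] m = (\<Sum>i\<in>{0, 1, 2, 3::nat}. if face M i [a, b, c] = m then (-1) ^ i else 0)"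
    unfolding simplex_bd_def faces by (rule sum.inter_filter) simp
  also have "\<dots> = (if [b, c] = m then 1 else 0) + (if [a \<otimes>\<^bsub>M\<^esub> b, c] = m then -1 else 0)
      + (if [a, b \<otimes>\<^bsub>M\<^esub> c] = m then 1 else 0) + (if [a, b] = m then -1 else 0)"
    using sum4[of "\<lambda>i. if face M i [a, b, c] = m then (-1) ^ i else 0"]
    by (simp only: face_3_0 face_3_1 face_3_2 face_3_3) simp
  finally show "simplex_bd M [a, b, c] m = \<dots>" .
qed

section \<open>Evaluating a cochain on a chain\<close>

definition eval_chain :: "('c, 'd) monoid_scheme \<Rightarrow> ('a \<Rightarrow> 'c) \<Rightarrow> ('a \<Rightarrow> int) \<Rightarrow> 'c" where
  "eval_chain A f u = finprod A (\<lambda>l. f l [^]\<^bsub>A\<^esub> u l) (supp u)"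

context comm_group begin

lemma finprod_int_pow:
  assumes "finite P" "g \<in> P \<rightarrow> carrier G"
  shows "finprod G g P [^] (k::int) = finprod G (\<lambda>p. g p [^] k) P"
  using assms
proof (induction P rule: finite_induct)
  case (insert q P)
  then show ?case by (simp add: int_pow_distrib Pi_iff)
qed simp

lemma finprod_inv:
  assumes "finite P" "g \<in> P \<rightarrow> carrier G"
  shows "finprod G (\<lambda>p. inv (g p)) P = inv (finprod G g P)"
proof -
  have "finprod G (\<lambda>p. inv (g p)) P = finprod G (\<lambda>p. g p [^] (-1::int)) P"
    using assms(2) int_pow_neg[of _ 1] by (intro finprod_cong') (auto simp: Pi_iff)
  also have "\<dots> = inv (finprod G g P)"
    using finprod_int_pow[OF assms, of "-1"] assms by (simp add: int_pow_neg)
  finally show ?thesis .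
qed

lemma eval_chain_on:
  assumes f: "f \<in> UNIV \<rightarrow> carrier G" and T: "finite T" "supp u \<subseteq> T"
  shows "eval_chain G f u = finprod G (\<lambda>l. f l [^] u l) T"
  unfolding eval_chain_def using assms
  by (intro finprod_mono_neutral_cong_left) (auto simp: supp_def Pi_iff)

lemma eval_chain_closed: "f \<in> UNIV \<rightarrow> carrier G \<Longrightarrow> eval_chain G f u \<in> carrier G"
  unfolding eval_chain_def by (auto intro!: finprod_closed)

lemma eval_chain_add:
  assumes f: "f \<in> UNIV \<rightarrow> carrier G" and fin: "finite (supp u)" "finite (supp v)"
  shows "eval_chain G f (\<lambda>l. u l + v l) = eval_chain G f u \<otimes> eval_chain G f v"
proof -
  let ?T = "supp u \<union> supp v"
  have "eval_chain G f (\<lambda>l. u l + v l) = finprod G (\<lambda>l. f l [^] u l \<otimes> f l [^] v l) ?T"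
    using f fin supp_add[of u v] by (subst eval_chain_on) (auto simp: int_pow_mult Pi_iff)
  also have "\<dots> = eval_chain G f u \<otimes> eval_chain G f v"
    using f fin by (simp add: finprod_multf Pi_iff eval_chain_on[of f "supp u \<union> supp v"])
  finally show ?thesis .
qed

lemma eval_chain_uminus:
  assumes f: "f \<in> UNIV \<rightarrow> carrier G" and fin: "finite (supp u)"
  shows "eval_chain G f (\<lambda>l. - u l) = inv (eval_chain G f u)"
proof -
  have "eval_chain G f (\<lambda>l. - u l) \<otimes> eval_chain G f u = eval_chain G f (\<lambda>_. 0)"
    using eval_chain_add[OF f, of "\<lambda>l. - u l" u] fin by simp
  also have "\<dots> = \<one>" by (simp add: eval_chain_def supp_def)
  finally show ?thesis using eval_chain_closed[OF f] by (metis inv_equality)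
qed

lemma eval_chain_sum:
  assumes f: "f \<in> UNIV \<rightarrow> carrier G" and P: "finite P" and fin: "\<And>p. p \<in> P \<Longrightarrow> finite (supp (g p))"
  shows "eval_chain G f (\<lambda>l. \<Sum>p\<in>P. g p l) = finprod G (\<lambda>p. eval_chain G f (g p)) P"
  using P fin
proof (induction P rule: finite_induct)
  case empty thus ?case by (simp add: eval_chain_def supp_def)
next
  case (insert q P)
  have "finite (supp (\<lambda>l. \<Sum>p\<in>P. g p l))"
    using supp_sum[of g P] insert by (auto intro: finite_subset)
  then show ?case
    using insert eval_chain_add[OF f, of "g q" "\<lambda>l. \<Sum>p\<in>P. g p l"] eval_chain_closed[OF f]
    by (simp add: Pi_iff)
qed

lemma eval_chain_scale:
  assumes f: "f \<in> UNIV \<rightarrow> carrier G" and fin: "finite (supp u)"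
  shows "eval_chain G f (\<lambda>m. k * u m) = eval_chain G f u [^] k"
proof -
  have "eval_chain G f (\<lambda>m. k * u m) = finprod G (\<lambda>l. (f l [^] u l) [^] k) (supp u)"
    using f fin by (subst eval_chain_on[where T = "supp u"])
      (auto simp: supp_def int_pow_pow Pi_iff mult.commute)
  also have "\<dots> = eval_chain G f u [^] k"
    using f fin by (simp add: eval_chain_def finprod_int_pow Pi_iff)
  finally show ?thesis .
qed

lemma eval_chain_delta:
  assumes f: "f \<in> UNIV \<rightarrow> carrier G"
  shows "eval_chain G f (\<lambda>l. if l = a then k else 0) = f a [^] k"
proof -
  have "eval_chain G f (\<lambda>l. if l = a then k else 0) = finprod G (\<lambda>l. f l [^] (if l = a then k else 0)) {a}"
    using f by (intro eval_chain_on) (auto simp: supp_def)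
  thus ?thesis using f by (simp add: Pi_iff)
qed

lemma eval_chain_delta':
  assumes "f \<in> UNIV \<rightarrow> carrier G"
  shows "eval_chain G f (\<lambda>l. if a = l then k else 0) = f a [^] k"
  using eval_chain_delta[OF assms, of a k] by (simp add: eq_commute)

lemma eval_bd:
  assumes f: "f \<in> UNIV \<rightarrow> carrier G" and fin: "finite (supp w)"
  shows "eval_chain G f (bd M w) = finprod G (\<lambda>l. eval_chain G f (simplex_bd M l) [^] w l) (supp w)"
proof -
  have "finite (supp (\<lambda>m. w l * simplex_bd M l m))" for l
    using finite_supp_simplex_bd by (rule finite_subset[rotated]) (auto simp: supp_def)
  then show ?thesis
    unfolding bd_eq_sum_simplex_bd using f fin
    by (simp add: eval_chain_sum eval_chain_scale finite_supp_simplex_bd)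
qed

lemma eval_simplex_bd_2:
  assumes f: "f \<in> UNIV \<rightarrow> carrier G"
  shows "eval_chain G f (simplex_bd M [a, b]) = f [b] \<otimes> inv (f [a \<otimes>\<^bsub>M\<^esub> b]) \<otimes> f [a]"
  unfolding simplex_bd_2 using f
  by (simp add: eval_chain_add eval_chain_delta' int_pow_neg Pi_iff finite_subset[OF supp_add])

lemma eval_simplex_bd_3:
  assumes f: "f \<in> UNIV \<rightarrow> carrier G"
  shows "eval_chain G f (simplex_bd M [a, b, c])
       = f [b, c] \<otimes> inv (f [a \<otimes>\<^bsub>M\<^esub> b, c]) \<otimes> f [a, b \<otimes>\<^bsub>M\<^esub> c] \<otimes> inv (f [a, b])"
  unfolding simplex_bd_3 using f
  by (simp add: eval_chain_add eval_chain_delta' int_pow_neg Pi_iff finite_subset[OF supp_add])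

lemma eval_push:
  assumes f: "f \<in> UNIV \<rightarrow> carrier G" and fin: "finite (supp u)"
  shows "eval_chain G f (push g u) = eval_chain G (f \<circ> g) u"
proof -
  have "push g u = (\<lambda>m. \<Sum>l\<in>supp u. if g l = m then u l else 0)"
    unfolding push_def using fin by (simp add: sum.inter_filter)
  then have "eval_chain G f (push g u) = finprod G (\<lambda>l. f (g l) [^] u l) (supp u)"
    using f fin by (simp add: eval_chain_sum eval_chain_delta')
  then show ?thesis by (simp add: eval_chain_def)
qed

lemma inv_from_product:
  assumes "x \<in> carrier G" "y \<in> carrier G" "z \<in> carrier G" and u: "x \<otimes> y \<otimes> z = u"
  shows "y \<otimes> inv u \<otimes> x = inv z"
proof -
  have cancel: "w \<otimes> inv (w \<otimes> z) = inv z" if "w \<in> carrier G" for w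
    using that assms(3) by (simp add: inv_mult m_assoc[symmetric])
  have "y \<otimes> inv u \<otimes> x = (x \<otimes> y) \<otimes> inv (x \<otimes> y \<otimes> z)"
    unfolding u[symmetric] using assms(1-3) by (simp add: m_ac)
  then show ?thesis using assms(1-3) cancel[of "x \<otimes> y"] by simp
qed

lemma product_quotient_one:
  assumes "x \<in> carrier G" "y \<in> carrier G" "z \<in> carrier G" "v \<in> carrier G" and e: "x \<otimes> y = z \<otimes> v"
  shows "z \<otimes> inv y \<otimes> v \<otimes> inv x = \<one>"
proof -
  have "z \<otimes> inv y \<otimes> v \<otimes> inv x = (z \<otimes> v) \<otimes> inv (x \<otimes> y)"
    using assms(1-4) by (simp add: inv_mult m_ac)
  then show ?thesis using assms(1-4) by (simp add: e)
qed

lemma finprod_alternating: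
  assumes b: "b \<in> {1..2 * n} \<rightarrow> carrier G"
  shows "finprod G (\<lambda>i. b i [^] ((-1::int) ^ i)) {1..2 * n}
       = finprod G (\<lambda>k. b (2 * k)) {1..n} \<otimes> inv (finprod G (\<lambda>k. b (2 * k - 1)) {1..n})"
proof -
  let ?E = "(\<lambda>k. 2 * k) ` {1..n}" and ?O = "(\<lambda>k. 2 * k - 1) ` {1..n}"
  have split: "{1..2 * n} = ?E \<union> ?O"
  proof
    show "{1..2 * n} \<subseteq> ?E \<union> ?O"
    proof
      fix i assume i: "i \<in> {1..2 * n}"
      show "i \<in> ?E \<union> ?O"
      proof (cases "even i")
        case True then show ?thesis using i by (auto intro!: image_eqI[of _ _ "i div 2"])
      next
        case False
        then obtain k where "i = Suc (2 * k)" by (rule oddE) simp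
        then show ?thesis using i by (auto intro!: image_eqI[of _ _ "Suc k"])
      qed
    qed
  qed auto
  have disj: "?E \<inter> ?O = {}" by auto presburger
  have bE: "(\<lambda>k. b (2 * k)) \<in> {1..n} \<rightarrow> carrier G" and bO: "(\<lambda>k. b (2 * k - 1)) \<in> {1..n} \<rightarrow> carrier G"
    using b by (auto intro!: funcset_mem[OF b])
  have evens: "finprod G (\<lambda>i. b i [^] ((-1::int) ^ i)) ?E = finprod G (\<lambda>k. b (2 * k)) {1..n}"
    using bE by (subst finprod_reindex) (auto simp: inj_on_def power_mult Pi_iff intro!: finprod_cong')
  have odds: "finprod G (\<lambda>i. b i [^] ((-1::int) ^ i)) ?O = inv (finprod G (\<lambda>k. b (2 * k - 1)) {1..n})"
  proof -
    have odd_sign: "(-1::int) ^ (2 * k - 1) = -1" if "k \<ge> 1" for k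
      using that by (cases k) (auto simp: power_mult)
    have "finprod G (\<lambda>i. b i [^] ((-1::int) ^ i)) ?O = finprod G (\<lambda>k. inv (b (2 * k - 1))) {1..n}"
      using bO by (subst finprod_reindex) (auto simp: inj_on_def odd_sign int_pow_neg Pi_iff intro!: finprod_cong')
    then show ?thesis using bO by (simp add: finprod_inv)
  qed
  have "(\<lambda>i. b i [^] ((-1::int) ^ i)) \<in> {1..2 * n} \<rightarrow> carrier G"
    using b by (auto simp: Pi_iff)
  then have "finprod G (\<lambda>i. b i [^] ((-1::int) ^ i)) (?E \<union> ?O)
      = finprod G (\<lambda>i. b i [^] ((-1::int) ^ i)) ?E \<otimes> finprod G (\<lambda>i. b i [^] ((-1::int) ^ i)) ?O"
    unfolding split by (intro finprod_Un_disjoint[OF _ _ disj]) auto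
  then show ?thesis unfolding split evens odds .
qed

end

lemma ordprod_map_distinct:
  assumes "comm_monoid M" "distinct xs" "f \<in> set xs \<rightarrow> carrier M"
  shows "ordprod M (map f xs) = finprod M f (set xs)"
  using assms(2,3)
proof (induction xs)
  case Nil
  show ?case using assms(1) by (simp add: ordprod_def comm_monoid.finprod_empty)
next
  case (Cons x xs)
  then show ?case
    using assms(1) by (simp add: ordprod_def comm_monoid.finprod_insert Pi_iff)
qed

section \<open>The central quotient \<open>G/\<Gamma>\<close>\<close>

context group begin

lemma inv_cancel_left: "x \<in> carrier G \<Longrightarrow> y \<in> carrier G \<Longrightarrow> inv x \<otimes> (x \<otimes> y) = y"
  by (simp add: m_assoc[symmetric])

lemma inv_cancel_left': "x \<in> carrier G \<Longrightarrow> y \<in> carrier G \<Longrightarrow> x \<otimes> (inv x \<otimes> y) = y"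
  by (simp add: m_assoc[symmetric])

text \<open>The two group identities behind \<open>\<kappa>\<close> and \<open>\<beta>\<close>; each needs only one commutation, which
  will come from centrality of \<open>K/\<Gamma>\<close>.\<close>

lemma coboundary_identity:
  assumes "a1 \<in> carrier G" "b1 \<in> carrier G" "a2 \<in> carrier G" "b2 \<in> carrier G" "b12 \<in> carrier G"
    and comm: "(a2 \<otimes> inv b2) \<otimes> b1 = b1 \<otimes> (a2 \<otimes> inv b2)"
  shows "(a1 \<otimes> inv b1) \<otimes> (a2 \<otimes> inv b2) \<otimes> (b1 \<otimes> b2 \<otimes> inv b12) = a1 \<otimes> a2 \<otimes> inv b12"
proof -
  have "(a1 \<otimes> inv b1) \<otimes> (a2 \<otimes> inv b2) \<otimes> (b1 \<otimes> b2 \<otimes> inv b12)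
      = a1 \<otimes> (inv b1 \<otimes> ((a2 \<otimes> inv b2) \<otimes> b1)) \<otimes> (b2 \<otimes> inv b12)"
    using assms(1-5) by (simp add: m_assoc)
  also have "\<dots> = a1 \<otimes> (inv b1 \<otimes> (b1 \<otimes> (a2 \<otimes> inv b2))) \<otimes> (b2 \<otimes> inv b12)"
    by (simp only: comm)
  also have "\<dots> = a1 \<otimes> a2 \<otimes> inv b12"
    using assms(1-5) by (simp add: m_assoc inv_cancel_left inv_cancel_left')
  finally show ?thesis .
qed

lemma cocycle_identity:
  assumes "b1 \<in> carrier G" "b2 \<in> carrier G" "b3 \<in> carrier G" "b12 \<in> carrier G" "b23 \<in> carrier G"
    "b123 \<in> carrier G"
    and comm: "(b2 \<otimes> b3 \<otimes> inv b23) \<otimes> b1 = b1 \<otimes> (b2 \<otimes> b3 \<otimes> inv b23)"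
  shows "(b1 \<otimes> b2 \<otimes> inv b12) \<otimes> (b12 \<otimes> b3 \<otimes> inv b123)
       = (b2 \<otimes> b3 \<otimes> inv b23) \<otimes> (b1 \<otimes> b23 \<otimes> inv b123)"
proof -
  have "(b2 \<otimes> b3 \<otimes> inv b23) \<otimes> (b1 \<otimes> b23 \<otimes> inv b123)
      = ((b2 \<otimes> b3 \<otimes> inv b23) \<otimes> b1) \<otimes> (b23 \<otimes> inv b123)"
    using assms(1-6) by (simp add: m_assoc)
  also have "\<dots> = (b1 \<otimes> (b2 \<otimes> b3 \<otimes> inv b23)) \<otimes> (b23 \<otimes> inv b123)"
    by (simp only: comm)
  also have "\<dots> = (b1 \<otimes> b2 \<otimes> inv b12) \<otimes> (b12 \<otimes> b3 \<otimes> inv b123)"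
    using assms(1-6) by (simp add: m_assoc inv_cancel_left inv_cancel_left')
  finally show ?thesis by simp
qed

end

text \<open>Products in \<open>G/\<Gamma>\<close> are kept abstract rather than unfolded to set products.\<close>

declare mult_FactGroup [simp del]

locale central_quotient =
  fixes G :: "'g monoid" and H :: "'h monoid" and \<phi> :: "'g \<Rightarrow> 'h" and t :: "'h \<Rightarrow> 'g"
  assumes group_G: "group G" and group_H: "group H" and hom: "\<phi> \<in> hom G H"
    and t_section: "\<forall>h\<in>carrier H. t h \<in> carrier G \<and> \<phi> (t h) = h"
begin

abbreviation "\<Gamma> \<equiv> Gamma G H \<phi>"
abbreviation "K \<equiv> kernel G H \<phi>"
abbreviation "Q \<equiv> G Mod \<Gamma>"
abbreviation "A \<equiv> KmodGamma G H \<phi>"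
abbreviation "\<pi> \<equiv> (\<lambda>x. \<Gamma> #>\<^bsub>G\<^esub> x)"

sublocale gh: group_hom G H \<phi>
  using group_G group_H hom by (simp add: group_hom_def group_hom_axioms_def)

lemma t_closed: "h \<in> carrier H \<Longrightarrow> t h \<in> carrier G"
  using t_section by auto

lemma phi_t: "h \<in> carrier H \<Longrightarrow> \<phi> (t h) = h"
  using t_section by auto

abbreviation "commutators \<equiv> {g \<otimes>\<^bsub>G\<^esub> k \<otimes>\<^bsub>G\<^esub> inv\<^bsub>G\<^esub> g \<otimes>\<^bsub>G\<^esub> inv\<^bsub>G\<^esub> k | g k. g \<in> carrier G \<and> k \<in> K}"

lemma kernel_subset: "K \<subseteq> carrier G"
  by (auto simp: kernel_def)

lemma commutators_kernel: "commutators \<subseteq> K"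
  using kernel_subset by (auto simp: kernel_def)

lemma Gamma_normal: "\<Gamma> \<lhd> G"
proof -
  let ?F = "{N. N \<lhd> G \<and> commutators \<subseteq> N}"
  have "carrier G \<in> ?F"
    using group.normal_self[OF group_G] commutators_kernel kernel_subset by auto
  then have "subgroup (\<Inter>?F) G"
    by (intro group.subgroups_Inter[OF group_G]) (auto dest: normal_imp_subgroup)
  moreover have "\<forall>x\<in>carrier G. \<forall>h\<in>\<Inter>?F. x \<otimes>\<^bsub>G\<^esub> h \<otimes>\<^bsub>G\<^esub> inv\<^bsub>G\<^esub> x \<in> \<Inter>?F"
    using group.normal_inv_iff[OF group_G] by blast
  ultimately show ?thesis
    unfolding Gamma_def using group.normal_inv_iff[OF group_G] by blast
qed

lemma commutators_Gamma: "commutators \<subseteq> \<Gamma>"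
  unfolding Gamma_def by blast

sublocale Gamma: normal \<Gamma> G by (rule Gamma_normal)

sublocale Q: group Q by (rule Gamma.factorgroup_is_group)

sublocale quotient_map: group_hom G Q \<pi>
  using group_G Gamma.r_coset_hom_Mod by (simp add: group_hom_def group_hom_axioms_def Q.group_axioms)

lemma carrier_Q: "carrier Q = \<pi> ` carrier G"
  by (simp add: carrier_FactGroup)

lemma A_eq: "A = Q\<lparr>carrier := \<pi> ` K\<rparr>"
  by (simp add: KmodGamma_def)

lemma carrier_A: "carrier A = \<pi> ` K"
  by (simp add: A_eq)

lemma subgroup_A: "subgroup (\<pi> ` K) Q"
  by (rule quotient_map.subgroup_img_is_subgroup[OF gh.subgroup_kernel])

lemma A_subset_Q: "x \<in> carrier A \<Longrightarrow> x \<in> carrier Q"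
  using subgroup.subset[OF subgroup_A] carrier_A by auto

lemma mult_A: "x \<otimes>\<^bsub>A\<^esub> y = x \<otimes>\<^bsub>Q\<^esub> y"
  by (simp add: A_eq)

lemma inv_A: "x \<in> carrier A \<Longrightarrow> inv\<^bsub>A\<^esub> x = inv\<^bsub>Q\<^esub> x"
  using subgroup_A by (simp add: A_eq Q.m_inv_consistent)

lemma pi_eq_if_diff_in_Gamma:
  assumes "a \<in> carrier G" "b \<in> carrier G" "a \<otimes>\<^bsub>G\<^esub> inv\<^bsub>G\<^esub> b \<in> \<Gamma>"
  shows "\<pi> a = \<pi> b"
proof -
  have "\<pi> a = \<pi> ((a \<otimes>\<^bsub>G\<^esub> inv\<^bsub>G\<^esub> b) \<otimes>\<^bsub>G\<^esub> b)"
    using assms by (simp add: gh.G.m_assoc)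
  also have "\<dots> = (\<Gamma> #>\<^bsub>G\<^esub> (a \<otimes>\<^bsub>G\<^esub> inv\<^bsub>G\<^esub> b)) #>\<^bsub>G\<^esub> b"
    using assms Gamma.subset by (intro gh.G.coset_mult_assoc[symmetric]) auto
  also have "\<Gamma> #>\<^bsub>G\<^esub> (a \<otimes>\<^bsub>G\<^esub> inv\<^bsub>G\<^esub> b) = \<Gamma>"
    using assms Gamma.subgroup_axioms by (intro gh.G.coset_join2) auto
  finally show ?thesis .
qed

lemma central:
  assumes "z \<in> carrier A" "q \<in> carrier Q"
  shows "z \<otimes>\<^bsub>Q\<^esub> q = q \<otimes>\<^bsub>Q\<^esub> z"
proof -
  obtain k where k: "k \<in> K" "z = \<pi> k" using assms carrier_A by auto
  obtain g where g: "g \<in> carrier G" "q = \<pi> g" using assms carrier_Q by auto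
  have kG: "k \<in> carrier G" using k kernel_subset by auto
  have "(g \<otimes>\<^bsub>G\<^esub> k) \<otimes>\<^bsub>G\<^esub> inv\<^bsub>G\<^esub> (k \<otimes>\<^bsub>G\<^esub> g) = g \<otimes>\<^bsub>G\<^esub> k \<otimes>\<^bsub>G\<^esub> inv\<^bsub>G\<^esub> g \<otimes>\<^bsub>G\<^esub> inv\<^bsub>G\<^esub> k"
    using g kG by (simp add: gh.G.inv_mult_group gh.G.m_assoc)
  also have "\<dots> \<in> \<Gamma>" using commutators_Gamma g k by blast
  finally have "\<pi> (g \<otimes>\<^bsub>G\<^esub> k) = \<pi> (k \<otimes>\<^bsub>G\<^esub> g)"
    using g kG by (intro pi_eq_if_diff_in_Gamma) auto
  then show ?thesis using g k kG by simp
qed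

lemma comm_group_A: "comm_group A"
proof (rule group.group_comm_groupI)
  show "group A" unfolding A_eq by (rule Q.subgroup_imp_group[OF subgroup_A])
  show "x \<otimes>\<^bsub>A\<^esub> y = y \<otimes>\<^bsub>A\<^esub> x" if "x \<in> carrier A" "y \<in> carrier A" for x y
    using central[OF that(1) A_subset_Q[OF that(2)]] by (simp add: mult_A)
qed

sublocale A: comm_group A by (rule comm_group_A)

end

section \<open>The cochains \<open>\<kappa>\<close> on \<open>G\<close> and \<open>\<beta>\<close> on \<open>H\<close>\<close>

definition splitting_cochain :: "('g, 'a) monoid_scheme \<Rightarrow> ('h, 'b) monoid_scheme \<Rightarrow> ('g \<Rightarrow> 'h)
    \<Rightarrow> ('h \<Rightarrow> 'g) \<Rightarrow> 'g list \<Rightarrow> 'g set" where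
  "splitting_cochain G H \<phi> t l = (if length l = 1 \<and> hd l \<in> carrier G
      then Gamma G H \<phi> #>\<^bsub>G\<^esub> (hd l \<otimes>\<^bsub>G\<^esub> inv\<^bsub>G\<^esub> t (\<phi> (hd l))) else Gamma G H \<phi>)"

definition extension_cocycle :: "('g, 'a) monoid_scheme \<Rightarrow> ('h, 'b) monoid_scheme \<Rightarrow> ('g \<Rightarrow> 'h)
    \<Rightarrow> ('h \<Rightarrow> 'g) \<Rightarrow> 'h list \<Rightarrow> 'g set" where
  "extension_cocycle G H \<phi> t l = (if length l = 2 \<and> set l \<subseteq> carrier H
      then Gamma G H \<phi> #>\<^bsub>G\<^esub> (t (l ! 0) \<otimes>\<^bsub>G\<^esub> t (l ! 1) \<otimes>\<^bsub>G\<^esub> inv\<^bsub>G\<^esub> t (l ! 0 \<otimes>\<^bsub>H\<^esub> l ! 1))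
      else Gamma G H \<phi>)"

context central_quotient begin

abbreviation "\<kappa> \<equiv> splitting_cochain G H \<phi> t"
abbreviation "\<beta> \<equiv> extension_cocycle G H \<phi> t"

lemma one_A: "\<Gamma> \<in> carrier A"
proof -
  have "\<pi> \<one>\<^bsub>G\<^esub> = \<Gamma>" by (rule gh.G.coset_mult_one[OF Gamma.subset])
  moreover have "\<one>\<^bsub>G\<^esub> \<in> K" by (simp add: kernel_def)
  ultimately show ?thesis unfolding carrier_A by (metis image_eqI)
qed

lemma pi_kernel_in_A: "k \<in> K \<Longrightarrow> \<pi> k \<in> carrier A"
  by (simp add: carrier_A)

lemma kappa_closed: "\<kappa> \<in> UNIV \<rightarrow> carrier A"
proof
  fix l :: "'g list"
  show "\<kappa> l \<in> carrier A"
  proof (cases "length l = 1 \<and> hd l \<in> carrier G")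
    case True
    have "hd l \<otimes>\<^bsub>G\<^esub> inv\<^bsub>G\<^esub> t (\<phi> (hd l)) \<in> K"
      using True t_closed phi_t by (simp add: kernel_def)
    then show ?thesis
      unfolding splitting_cochain_def if_P[OF True] by (rule pi_kernel_in_A)
  next
    case False
    show ?thesis unfolding splitting_cochain_def if_not_P[OF False] by (rule one_A)
  qed
qed

lemma beta_closed: "\<beta> \<in> UNIV \<rightarrow> carrier A"
proof
  fix l :: "'h list"
  show "\<beta> l \<in> carrier A"
  proof (cases "length l = 2 \<and> set l \<subseteq> carrier H")
    case True
    then obtain h1 h2 where "l = [h1, h2]" "h1 \<in> carrier H" "h2 \<in> carrier H"
      by (cases l rule: list.exhaust; cases "tl l") auto
    then have "t (l ! 0) \<otimes>\<^bsub>G\<^esub> t (l ! 1) \<otimes>\<^bsub>G\<^esub> inv\<^bsub>G\<^esub> t (l ! 0 \<otimes>\<^bsub>H\<^esub> l ! 1) \<in> K"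
      using t_closed phi_t by (simp add: kernel_def)
    then show ?thesis
      unfolding extension_cocycle_def if_P[OF True] by (rule pi_kernel_in_A)
  next
    case False
    show ?thesis unfolding extension_cocycle_def if_not_P[OF False] by (rule one_A)
  qed
qed

lemma kappa_in_Q: "g \<in> carrier G \<Longrightarrow> \<kappa> [g] = \<pi> g \<otimes>\<^bsub>Q\<^esub> inv\<^bsub>Q\<^esub> \<pi> (t (\<phi> g))"
  using t_closed by (simp add: splitting_cochain_def)

lemma beta_in_Q: "h1 \<in> carrier H \<Longrightarrow> h2 \<in> carrier H \<Longrightarrow>
   \<beta> [h1, h2] = \<pi> (t h1) \<otimes>\<^bsub>Q\<^esub> \<pi> (t h2) \<otimes>\<^bsub>Q\<^esub> inv\<^bsub>Q\<^esub> \<pi> (t (h1 \<otimes>\<^bsub>H\<^esub> h2))"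
  using t_closed by (simp add: extension_cocycle_def)

lemma kappa_coboundary:
  assumes "g1 \<in> carrier G" "g2 \<in> carrier G"
  shows "\<kappa> [g1] \<otimes>\<^bsub>A\<^esub> \<kappa> [g2] \<otimes>\<^bsub>A\<^esub> \<beta> [\<phi> g1, \<phi> g2] = \<kappa> [g1 \<otimes>\<^bsub>G\<^esub> g2]"
proof -
  have h: "\<phi> g1 \<in> carrier H" "\<phi> g2 \<in> carrier H" using assms by auto
  have "\<kappa> [g2] \<otimes>\<^bsub>Q\<^esub> \<pi> (t (\<phi> g1)) = \<pi> (t (\<phi> g1)) \<otimes>\<^bsub>Q\<^esub> \<kappa> [g2]"
    using kappa_closed h t_closed by (intro central) auto
  then show ?thesis
    using Q.coboundary_identity[of "\<pi> g1" "\<pi> (t (\<phi> g1))" "\<pi> g2" "\<pi> (t (\<phi> g2))"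
        "\<pi> (t (\<phi> g1 \<otimes>\<^bsub>H\<^esub> \<phi> g2))"] assms h t_closed
    by (simp add: mult_A kappa_in_Q beta_in_Q)
qed

lemma beta_cocycle:
  assumes "h1 \<in> carrier H" "h2 \<in> carrier H" "h3 \<in> carrier H"
  shows "\<beta> [h1, h2] \<otimes>\<^bsub>A\<^esub> \<beta> [h1 \<otimes>\<^bsub>H\<^esub> h2, h3] = \<beta> [h2, h3] \<otimes>\<^bsub>A\<^esub> \<beta> [h1, h2 \<otimes>\<^bsub>H\<^esub> h3]"
proof -
  have "\<beta> [h2, h3] \<otimes>\<^bsub>Q\<^esub> \<pi> (t h1) = \<pi> (t h1) \<otimes>\<^bsub>Q\<^esub> \<beta> [h2, h3]"
    using beta_closed assms t_closed by (intro central) auto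
  then show ?thesis
    using Q.cocycle_identity[of "\<pi> (t h1)" "\<pi> (t h2)" "\<pi> (t h3)" "\<pi> (t (h1 \<otimes>\<^bsub>H\<^esub> h2))"
        "\<pi> (t (h2 \<otimes>\<^bsub>H\<^esub> h3))" "\<pi> (t (h1 \<otimes>\<^bsub>H\<^esub> h2 \<otimes>\<^bsub>H\<^esub> h3))"] assms t_closed
    by (simp add: mult_A beta_in_Q gh.H.m_assoc)
qed

lemma kappa_difference:
  assumes "a \<in> carrier G" "b \<in> carrier G" "\<phi> a = \<phi> b"
  shows "\<pi> (a \<otimes>\<^bsub>G\<^esub> inv\<^bsub>G\<^esub> b) = \<kappa> [a] \<otimes>\<^bsub>A\<^esub> inv\<^bsub>A\<^esub> \<kappa> [b]"
proof -
  have "\<pi> (a \<otimes>\<^bsub>G\<^esub> inv\<^bsub>G\<^esub> b) \<in> carrier A"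
    by (rule pi_kernel_in_A) (use assms in \<open>simp add: kernel_def\<close>)
  moreover have "\<pi> (a \<otimes>\<^bsub>G\<^esub> inv\<^bsub>G\<^esub> b) \<otimes>\<^bsub>A\<^esub> \<kappa> [b] = \<kappa> [a]"
    using assms t_closed by (simp add: mult_A kappa_in_Q Q.m_assoc Q.inv_cancel_left)
  ultimately show ?thesis
    using kappa_closed by (metis A.inv_solve_right Pi_I' UNIV_I funcset_mem)
qed

section \<open>Chain-level identities\<close>

lemma eval_kappa_bd:
  assumes w: "w \<in> chains G 2"
  shows "eval_chain A \<kappa> (bd G w) = inv\<^bsub>A\<^esub> eval_chain A \<beta> (push (map \<phi>) w)"
proof -
  have fin: "finite (supp w)" using w by (rule finite_supp_chains)
  have simplex: "eval_chain A \<kappa> (simplex_bd G l) = inv\<^bsub>A\<^esub> \<beta> (map \<phi> l)" if l_w: "l \<in> supp w" for l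
  proof -
    obtain a b where l: "l = [a, b]" "a \<in> carrier G" "b \<in> carrier G"
      using chains_2_shape[OF w l_w] by blast
    have "\<kappa> [a] \<otimes>\<^bsub>A\<^esub> \<kappa> [b] \<otimes>\<^bsub>A\<^esub> \<beta> [\<phi> a, \<phi> b] = \<kappa> [a \<otimes>\<^bsub>G\<^esub> b]"
      by (rule kappa_coboundary[OF l(2,3)])
    then show ?thesis
      using kappa_closed beta_closed l
      by (simp add: A.eval_simplex_bd_2 A.inv_from_product Pi_iff)
  qed
  have "eval_chain A \<kappa> (bd G w) = finprod A (\<lambda>l. eval_chain A \<kappa> (simplex_bd G l) [^]\<^bsub>A\<^esub> w l) (supp w)"
    by (rule A.eval_bd[OF kappa_closed fin])
  also have "\<dots> = finprod A (\<lambda>l. inv\<^bsub>A\<^esub> (\<beta> (map \<phi> l) [^]\<^bsub>A\<^esub> w l)) (supp w)"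
    using beta_closed by (intro A.finprod_cong') (simp_all add: simplex A.int_pow_inv Pi_iff)
  also have "\<dots> = inv\<^bsub>A\<^esub> eval_chain A (\<beta> \<circ> map \<phi>) w"
    using fin beta_closed by (simp add: A.finprod_inv eval_chain_def Pi_iff)
  also have "\<dots> = inv\<^bsub>A\<^esub> eval_chain A \<beta> (push (map \<phi>) w)"
    using fin beta_closed by (simp add: A.eval_push)
  finally show ?thesis .
qed

lemma eval_beta_bd:
  assumes w: "w \<in> chains H 3"
  shows "eval_chain A \<beta> (bd H w) = \<one>\<^bsub>A\<^esub>"
proof -
  have "eval_chain A \<beta> (simplex_bd H l) = \<one>\<^bsub>A\<^esub>" if l_w: "l \<in> supp w" for l
  proof -
    obtain a b c where l: "l = [a, b, c]" "a \<in> carrier H" "b \<in> carrier H" "c \<in> carrier H"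
      using chains_3_shape[OF w l_w] by blast
    then show ?thesis
      using beta_cocycle[OF l(2-4)] beta_closed
      by (simp add: A.eval_simplex_bd_3 A.product_quotient_one Pi_iff)
  qed
  then show ?thesis
    using finite_supp_chains[OF w]
    by (simp add: A.eval_bd[OF beta_closed] A.finprod_one_eqI)
qed

lemma psi_eq_eval_eps:
  assumes c: "c \<in> coker_chains G \<phi> 1"
  shows "psi G H \<phi> c = eval_chain A \<kappa> (eps c)"
proof -
  have fin: "finite (supp c)" using c by (simp add: coker_chains_def)
  have pair: "eval_chain A \<kappa> (\<lambda>l. (if fst p = l then c p else 0) - (if snd p = l then c p else 0))
      = (\<Gamma> #>\<^bsub>G\<^esub> (hd (fst p) \<otimes>\<^bsub>G\<^esub> inv\<^bsub>G\<^esub> hd (snd p))) [^]\<^bsub>A\<^esub> c p" if p_c: "p \<in> supp c" for p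
  proof -
    obtain a b where p: "p = ([a], [b])" "a \<in> carrier G" "b \<in> carrier G" "\<phi> a = \<phi> b"
      using coker_chains_1_shape[OF c p_c] by blast
    have "(\<lambda>l. (if fst p = l then c p else 0) - (if snd p = l then c p else 0))
        = (\<lambda>l. (if [a] = l then c p else 0) + (if [b] = l then - c p else 0))"
      using p by auto
    then have "eval_chain A \<kappa> (\<lambda>l. (if fst p = l then c p else 0) - (if snd p = l then c p else 0))
        = \<kappa> [a] [^]\<^bsub>A\<^esub> c p \<otimes>\<^bsub>A\<^esub> \<kappa> [b] [^]\<^bsub>A\<^esub> (- c p)"
      by (simp add: A.eval_chain_add[OF kappa_closed] A.eval_chain_delta'[OF kappa_closed])
    also have "\<dots> = (\<kappa> [a] \<otimes>\<^bsub>A\<^esub> inv\<^bsub>A\<^esub> \<kappa> [b]) [^]\<^bsub>A\<^esub> c p"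
      using kappa_closed by (simp add: Pi_iff A.int_pow_distrib A.int_pow_inv A.int_pow_neg)
    finally show ?thesis
      using kappa_difference[OF p(2-4)] by (simp add: p)
  qed
  have "psi G H \<phi> c = finprod A (\<lambda>p. eval_chain A \<kappa>
      (\<lambda>l. (if fst p = l then c p else 0) - (if snd p = l then c p else 0))) (supp c)"
    unfolding psi_def
    by (rule A.finprod_cong') (use pair A.eval_chain_closed[OF kappa_closed] in auto)
  also have "\<dots> = eval_chain A \<kappa> (eps c)"
    unfolding eps_def using fin
    by (intro A.eval_chain_sum[OF kappa_closed, symmetric])
      (auto intro: finite_subset[of _ "{fst p, snd p}" for p] simp: supp_def)
  finally show ?thesis .
qed

lemma eval_beta_zchain:
  "eval_chain A \<beta> (zchain n xs ys) = finprod A (\<lambda>i. \<beta> [xs i, ys i] [^]\<^bsub>A\<^esub> ((-1::int) ^ i)) {1..2 * n}"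
  unfolding zchain_def by (simp add: A.eval_chain_sum[OF beta_closed] A.eval_chain_delta[OF beta_closed])

text \<open>\<open>ordprod\<close> only uses the multiplication and unit, which \<open>K/\<Gamma>\<close> shares with \<open>G/\<Gamma>\<close>.\<close>

lemma ordprod_A: "ordprod Q xs = ordprod A xs"
  by (simp add: ordprod_def A_eq)

lemma fphi_eq_alternating:
  assumes xy: "\<forall>i\<in>{1..2 * n}. xs i \<in> carrier H \<and> ys i \<in> carrier H"
  shows "fphi G H \<phi> t n xs ys = finprod A (\<lambda>i. \<beta> [xs i, ys i] [^]\<^bsub>A\<^esub> ((-1::int) ^ i)) {1..2 * n}"
proof -
  let ?b = "\<lambda>i. \<beta> [xs i, ys i]"
  let ?e = "\<lambda>i. \<pi> (t (xs i) \<otimes>\<^bsub>G\<^esub> t (ys i) \<otimes>\<^bsub>G\<^esub> inv\<^bsub>G\<^esub> t (xs i \<otimes>\<^bsub>H\<^esub> ys i))"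
  have e_b: "?e i = ?b i" if "i \<in> {1..2 * n}" for i
    using xy that by (simp add: extension_cocycle_def)
  have b: "?b \<in> {1..2 * n} \<rightarrow> carrier A" using beta_closed by auto
  have ord: "ordprod Q (map (\<lambda>k. ?e (f k)) [1..<n + 1]) = finprod A (\<lambda>k. ?b (f k)) {1..n}"
    if f: "f \<in> {1..n} \<rightarrow> {1..2 * n}" for f
  proof -
    have "map (\<lambda>k. ?e (f k)) [1..<n + 1] = map (\<lambda>k. ?b (f k)) [1..<n + 1]"
      by (rule map_cong[OF refl], rule e_b, rule funcset_mem[OF f]) auto
    then have "ordprod Q (map (\<lambda>k. ?e (f k)) [1..<n + 1]) = ordprod A (map (\<lambda>k. ?b (f k)) [1..<n + 1])"
      by (simp only: ordprod_A)
    also have "\<dots> = finprod A (\<lambda>k. ?b (f k)) (set [1..<n + 1])"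
      using beta_closed by (intro ordprod_map_distinct[OF A.comm_monoid_axioms]) auto
    also have "set [1..<n + 1] = {1..n}" by auto
    finally show ?thesis .
  qed
  have "fphi G H \<phi> t n xs ys = finprod A (\<lambda>k. ?b (2 * k)) {1..n} \<otimes>\<^bsub>A\<^esub>
      inv\<^bsub>A\<^esub> finprod A (\<lambda>k. ?b (2 * k - 1)) {1..n}"
  proof -
    have "(\<lambda>k. 2 * k) \<in> {1..n} \<rightarrow> {1..2 * n}" "(\<lambda>k. 2 * k - 1) \<in> {1..n} \<rightarrow> {1..2 * n}" by auto
    note evens = ord[OF this(1)] and odds = ord[OF this(2)]
    have "finprod A (\<lambda>k. ?b (2 * k - 1)) {1..n} \<in> carrier A"
      using beta_closed by (intro A.finprod_closed) auto
    then show ?thesis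
      unfolding fphi_def Let_def evens odds by (simp only: mult_A inv_A)
  qed
  also have "\<dots> = finprod A (\<lambda>i. ?b i [^]\<^bsub>A\<^esub> ((-1::int) ^ i)) {1..2 * n}"
    by (rule A.finprod_alternating[OF b, symmetric])
  finally show ?thesis .
qed

end

lemma tot_bd_first_zero:
  assumes "tot_bd G H \<phi> (w1, w2) = ((\<lambda>_. 0), v)"
  shows "push (map \<phi>) w2 = (\<lambda>m. - bd H w1 m)" and "v = (\<lambda>m. - bd G w2 m)"
proof -
  have "bd H w1 m + push (map \<phi>) w2 m = 0" for m
    using assms by (simp add: tot_bd_def fun_eq_iff)
  then show "push (map \<phi>) w2 = (\<lambda>m. - bd H w1 m)"
    by (simp add: fun_eq_iff eq_neg_iff_add_eq_0 add.commute)
  show "v = (\<lambda>m. - bd G w2 m)"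
    using assms by (simp add: tot_bd_def)
qed

theorem mainTheorem1:
  fixes G :: "'g monoid" and H :: "'h monoid" and \<phi> :: "'g \<Rightarrow> 'h"
    and t :: "'h \<Rightarrow> 'g" and n :: nat and xs ys :: "nat \<Rightarrow> 'h"
    and zt :: "'g list \<Rightarrow> int" and c :: "('g list \<times> 'g list) \<Rightarrow> int"
  assumes "group G" and "group H" and "\<phi> \<in> hom G H" and "\<phi> ` carrier G = carrier H"
    and "\<forall>i\<in>{1..2*n}. xs i \<in> carrier H \<and> ys i \<in> carrier H"
    and "bd H (zchain n xs ys) = (\<lambda>_. 0)"
    and "\<forall>h\<in>carrier H. t h \<in> carrier G \<and> \<phi> (t h) = h"
    and "zt \<in> chains G 2" and "push (map \<phi>) zt = zchain n xs ys"
    and "c \<in> coker_chains G \<phi> 1"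
    and "\<exists>w1\<in>chains H 3. \<exists>w2\<in>chains G 2.
           tot_bd G H \<phi> (w1, w2) = ((\<lambda>_. 0), (\<lambda>m. eps c m + bd G zt m))"
  shows "psi G H \<phi> c = fphi G H \<phi> t n xs ys"
proof -
  interpret central_quotient G H \<phi> t
    using assms(1-3,7) by (simp add: central_quotient_def)
  obtain w1 w2 where w1: "w1 \<in> chains H 3" and w2: "w2 \<in> chains G 2"
    and tot: "tot_bd G H \<phi> (w1, w2) = ((\<lambda>_. 0), (\<lambda>m. eps c m + bd G zt m))"
    using assms(11) by blast
  have push_w2: "push (map \<phi>) w2 = (\<lambda>m. - bd H w1 m)"
    using tot_bd_first_zero(1)[OF tot] .
  have eps_c: "eps c = (\<lambda>m. - bd G w2 m + - bd G zt m)"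
    using tot_bd_first_zero(2)[OF tot] by (simp add: fun_eq_iff eq_diff_eq)
  have fin: "finite (supp w1)" "finite (supp w2)" "finite (supp zt)"
    using w1 w2 assms(8) by (simp_all add: finite_supp_chains)
  have "psi G H \<phi> c = eval_chain A \<kappa> (\<lambda>m. - bd G w2 m) \<otimes>\<^bsub>A\<^esub> eval_chain A \<kappa> (\<lambda>m. - bd G zt m)"
    unfolding psi_eq_eval_eps[OF assms(10)] eps_c
    by (rule A.eval_chain_add[OF kappa_closed]) (simp_all add: fin finite_supp_bd)
  also have "\<dots> = eval_chain A \<beta> (push (map \<phi>) w2) \<otimes>\<^bsub>A\<^esub> eval_chain A \<beta> (push (map \<phi>) zt)"
    using fin by (simp add: A.eval_chain_uminus[OF kappa_closed] finite_supp_bd eval_kappa_bd w2 assms(8)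
        A.eval_chain_closed[OF beta_closed])
  also have "\<dots> = eval_chain A \<beta> (zchain n xs ys)"
    using fin by (simp add: push_w2 assms(9) A.eval_chain_uminus[OF beta_closed] finite_supp_bd
        eval_beta_bd w1 A.eval_chain_closed[OF beta_closed])
  also have "\<dots> = fphi G H \<phi> t n xs ys"
    by (simp add: eval_beta_zchain fphi_eq_alternating[OF assms(5)])
  finally show ?thesis .
qed

end
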